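(* Let $S\in\mathbb{S}^d_m$ and $G\in\mathcal{M}(S)$. Then the sets $\{(x,y):y\in P_G(x)\}$ and $\{(x,y):x\in P_G(y)\}$ are closed in $\mathbb{R}^{2d}$, the set $B:=\{(x,y):x\in P_G(y),\ P_G(x)\not\subset P_G(y)\}$ is an $F_\sigma$-set, and consequently $\{(x,y):x\in P_G(x)\subset P_G(y)\}$ is a Borel subset of $\mathbb{R}^{2d}$.
   Context: $\mathbb{S}^d_m$: symmetric invertible $d\times d$ real matrices with exactly $m$ positive eigenvalues; $S(x,y):=\langle x,Sy\rangle$. $G\subset\mathbb{R}^d$ is $S$-monotone if $S(x-y,x-y)\ge0$ for $x,y\in G$; maximal if not a strict subset of another $S$-monotone set; $\mathcal{M}(S)$ is the family of maximal $S$-monotone sets. $P_G(y):=\operatorname{argmax}_{x\in G}(S(x,y)-\frac12S(x,x))$, $y\in\mathbb{R}^d$. An $F_\sigma$-set is a countable union of closed sets. *)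

theory Defs
  imports "HOL-Analysis.Analysis"
begin

definition Sform :: "real^'n^'n \<Rightarrow> real^'n \<Rightarrow> real^'n \<Rightarrow> real" where
  "Sform S x y = x \<bullet> (S *v y)"

text \<open>Number of positive eigenvalues counted with multiplicity (for symmetric S,
  geometric multiplicity = algebraic multiplicity).\<close>
definition pos_eig_count :: "real^'n^'n \<Rightarrow> nat" where
  "pos_eig_count S =
     (\<Sum>c\<in>{c. c > 0 \<and> (\<exists>x. x \<noteq> 0 \<and> S *v x = c *\<^sub>R x)}.
        dim {x. S *v x = c *\<^sub>R x})"

definition SSym :: "nat \<Rightarrow> (real^'n^'n) set" where
  "SSym m = {S. transpose S = S \<and> invertible S \<and> pos_eig_count S = m}"

definition S_monotone :: "real^'n^'n \<Rightarrow> (real^'n) set \<Rightarrow> bool" where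
  "S_monotone S G \<longleftrightarrow> (\<forall>x\<in>G. \<forall>y\<in>G. Sform S (x - y) (x - y) \<ge> 0)"

definition max_S_monotone :: "real^'n^'n \<Rightarrow> (real^'n) set set" where
  "max_S_monotone S = {G. S_monotone S G \<and> (\<forall>G'. S_monotone S G' \<and> G \<subseteq> G' \<longrightarrow> G' = G)}"

definition PG :: "real^'n^'n \<Rightarrow> (real^'n) set \<Rightarrow> real^'n \<Rightarrow> (real^'n) set" where
  "PG S G y = {x\<in>G. \<forall>z\<in>G. Sform S z y - Sform S z z / 2 \<le> Sform S x y - Sform S x x / 2}"

end

theory Submission
  imports Defs
begin

text \<open>Maximality forces G to be closed, since the closure of an S-monotone set is S-monotone.
  The graph of P_G is then closed, being cut out by one closed inequality for each competitor
  in G.  The pair (x, y) lies in B exactly when some z \<in> P_G(x) is beaten at y by some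
  w \<in> G; so B is the projection of a closed-and-open set of quadruples (x, y, z, w), and such
  projections are F_sigma because closed subsets of a Euclidean space are \<sigma>-compact.\<close>

lemma continuous_on_Sform [continuous_intros]:
  "continuous_on A f \<Longrightarrow> continuous_on A g \<Longrightarrow> continuous_on A (\<lambda>x. Sform S (f x) (g x))"
  unfolding Sform_def
  by (intro continuous_intros bounded_linear.continuous_on[OF matrix_vector_mul_bounded_linear])

definition PG_objective :: "real^'n^'n \<Rightarrow> real^'n \<Rightarrow> real^'n \<Rightarrow> real" where
  "PG_objective S y x = Sform S x y - Sform S x x / 2"

lemma PG_iff_maximizes_objective:
  "x \<in> PG S G y \<longleftrightarrow> x \<in> G \<and> (\<forall>z\<in>G. PG_objective S y z \<le> PG_objective S y x)"
  unfolding PG_def PG_objective_def by simp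

lemma continuous_on_PG_objective [continuous_intros]:
  "continuous_on A f \<Longrightarrow> continuous_on A g \<Longrightarrow> continuous_on A (\<lambda>x. PG_objective S (f x) (g x))"
  unfolding PG_objective_def by (intro continuous_intros) auto

lemma closed_max_S_monotone:
  assumes "G \<in> max_S_monotone S"
  shows "closed G"
proof -
  let ?M = "{p. Sform S (fst p - snd p) (fst p - snd p) \<ge> 0}"
  have "closed ?M"
    by (intro closed_Collect_le continuous_intros)
  moreover have "G \<times> G \<subseteq> ?M"
    using assms unfolding max_S_monotone_def S_monotone_def by auto
  ultimately have "closure G \<times> closure G \<subseteq> ?M"
    unfolding closure_Times[symmetric] by (rule closure_minimal[rotated])
  then have "S_monotone S (closure G)"
    unfolding S_monotone_def by auto
  with assms closure_subset have "closure G = G"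
    unfolding max_S_monotone_def by blast
  then show ?thesis
    by (metis closed_closure)
qed

lemma closed_graph_PG:
  assumes "closed G"
  shows "closed {(x, y). y \<in> PG S G x}"
proof -
  have "{(x, y). y \<in> PG S G x} =
      snd -` G \<inter> (\<Inter>z\<in>G. {p. PG_objective S (fst p) z \<le> PG_objective S (fst p) (snd p)})"
    by (auto simp: PG_iff_maximizes_objective)
  also have "closed \<dots>"
    by (intro closed_Int closed_vimage_snd assms closed_INT ballI closed_Collect_le continuous_intros)
  finally show ?thesis .
qed

lemma closed_graph_PG_swap:
  assumes "closed G"
  shows "closed {(x, y). x \<in> PG S G y}"
proof -
  have "{(x, y). x \<in> PG S G y} = prod.swap -` {(x, y). y \<in> PG S G x}"
    by auto
  then show ?thesis
    by (metis assms closed_graph_PG closed_vimage continuous_on_swap)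
qed

lemma fsigma_in_continuous_image:
  fixes f :: "'a::{real_normed_vector,heine_borel} \<Rightarrow> 'b::t2_space"
  assumes "fsigma_in euclidean S" and "continuous_on S f"
  shows "fsigma_in euclidean (f ` S)"
proof -
  obtain \<C> where "countable \<C>" and closed_\<C>: "\<And>C. C \<in> \<C> \<Longrightarrow> closed C" and S: "S = \<Union>\<C>"
    using assms(1) unfolding fsigma_in_def union_of_def closed_closedin by blast
  have "fsigma_in euclidean (f ` C)" if C: "C \<in> \<C>" for C
  proof -
    have "continuous_on (C \<inter> cball 0 (real n)) f" for n
      using C S assms(2) by (meson Union_upper continuous_on_subset inf.coboundedI1)
    then have "closedin euclidean (f ` (C \<inter> cball 0 (real n)))" for n
      using C closed_\<C> by (meson closed_Int_compact closed_closedin compact_cball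
          compact_continuous_image compact_imp_closed)
    then have "fsigma_in euclidean (\<Union>n. f ` (C \<inter> cball 0 (real n)))"
      by - (rule fsigma_in_Union, auto intro: closed_imp_fsigma_in)
    moreover have "(\<Union>n. C \<inter> cball 0 (real n)) = C"
      by (auto simp: mem_cball_0 intro: real_arch_simple)
    ultimately show ?thesis
      by (metis image_UN)
  qed
  moreover have "f ` S = \<Union>((`) f ` \<C>)"
    using S by blast
  ultimately show ?thesis
    using \<open>countable \<C>\<close> by (metis countable_image fsigma_in_Union imageE)
qed

lemma fsigma_in_PG_not_subset:
  fixes S :: "real^'n^'n"
  assumes "closed G"
  shows "fsigma_in euclidean {(x, y). x \<in> PG S G y \<and> \<not> PG S G x \<subseteq> PG S G y}"
proof -
  define W where "W = {((x, y), z, w). x \<in> PG S G y \<and> z \<in> PG S G x \<and> w \<in> G \<and>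
    PG_objective S y z < PG_objective S y w}"
  have "{(x, y). x \<in> PG S G y \<and> \<not> PG S G x \<subseteq> PG S G y} = fst ` W"
  proof (intro equalityI subsetI)
    fix p assume "p \<in> {(x, y). x \<in> PG S G y \<and> \<not> PG S G x \<subseteq> PG S G y}"
    then obtain x y z where p: "p = (x, y)" and "x \<in> PG S G y" "z \<in> PG S G x" "z \<notin> PG S G y"
      by blast
    moreover from this obtain w where "w \<in> G" "PG_objective S y z < PG_objective S y w"
      unfolding PG_iff_maximizes_objective by (meson not_le)
    ultimately have "((x, y), z, w) \<in> W"
      unfolding W_def by blast
    then show "p \<in> fst ` W"
      unfolding p by force
  next
    fix p assume "p \<in> fst ` W"
    then obtain x y z w where p: "p = (x, y)" and "x \<in> PG S G y" "z \<in> PG S G x"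
      and "w \<in> G" "PG_objective S y z < PG_objective S y w"
      unfolding W_def by force
    moreover from this have "z \<notin> PG S G y"
      unfolding PG_iff_maximizes_objective by (meson not_le)
    ultimately show "p \<in> {(x, y). x \<in> PG S G y \<and> \<not> PG S G x \<subseteq> PG S G y}"
      by blast
  qed
  moreover have "fsigma_in euclidean W"
  proof -
    let ?D = "{(x, y). x \<in> PG S G y}"
    let ?A = "fst -` ?D \<inter> (\<lambda>p. (fst (snd p), fst (fst p))) -` ?D \<inter> (snd \<circ> snd) -` G"
    let ?O = "{p :: ((real^'n) \<times> (real^'n)) \<times> (real^'n) \<times> (real^'n).
      PG_objective S (snd (fst p)) (fst (snd p)) < PG_objective S (snd (fst p)) (snd (snd p))}"
    have "closed ?A"
      using assms closed_graph_PG_swap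
      by (intro closed_Int closed_vimage continuous_intros) (auto simp: o_def)
    then have "fsigma_in euclidean ?A"
      unfolding closed_closedin by (rule closed_imp_fsigma_in)
    moreover have "open ?O"
      by (intro open_Collect_less continuous_intros)
    then have "fsigma_in euclidean ?O"
      by (rule open_imp_fsigma_in[OF metrizable_space_euclidean, unfolded open_openin[symmetric]])
    moreover have "W = ?A \<inter> ?O"
      unfolding W_def by auto
    ultimately show ?thesis
      by (simp add: fsigma_in_Int)
  qed
  ultimately show ?thesis
    by (simp add: fsigma_in_continuous_image[OF _ continuous_on_fst[OF continuous_on_id]])
qed

lemma fsigma_in_euclidean_imp_borel:
  assumes "fsigma_in euclidean S"
  shows "S \<in> sets borel"
proof -
  obtain \<C> where "countable \<C>" and "\<And>C. C \<in> \<C> \<Longrightarrow> closed C" and "S = \<Union>\<C>"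
    using assms unfolding fsigma_in_def union_of_def closed_closedin by blast
  then show ?thesis
    using borel_closed by (simp add: sets.countable_Union subsetI)
qed

theorem lemma1:
  fixes S :: "real^'n^'n" and G :: "(real^'n) set" and m :: nat
  assumes "S \<in> SSym m" and "G \<in> max_S_monotone S"
  shows "closed {(x, y). y \<in> PG S G x} \<and>
         closed {(x, y). x \<in> PG S G y} \<and>
         fsigma_in euclidean {(x, y). x \<in> PG S G y \<and> \<not> (PG S G x \<subseteq> PG S G y)} \<and>
         {(x, y). x \<in> PG S G x \<and> PG S G x \<subseteq> PG S G y} \<in> sets borel"
proof -
  have "closed G"
    using assms(2) by (rule closed_max_S_monotone)
  let ?D = "{(x, y). x \<in> PG S G y}"
  let ?B = "{(x, y). x \<in> PG S G y \<and> \<not> (PG S G x \<subseteq> PG S G y)}"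
  have D: "closed ?D" and B: "fsigma_in euclidean ?B"
    using \<open>closed G\<close> by (rule closed_graph_PG_swap, rule fsigma_in_PG_not_subset)
  have "closed ((\<lambda>x. (fst x, fst x)) -` ?D)"
    using D by (intro closed_vimage continuous_intros)
  have "{(x, y). x \<in> PG S G x \<and> PG S G x \<subseteq> PG S G y} =
      ((\<lambda>x. (fst x, fst x)) -` ?D \<inter> ?D) - ?B"
    by auto
  also have "\<dots> \<in> sets borel"
    using \<open>closed ((\<lambda>x. (fst x, fst x)) -` ?D)\<close> D B
    by (intro sets.Diff sets.Int borel_closed fsigma_in_euclidean_imp_borel)
  finally show ?thesis
    using closed_graph_PG[OF \<open>closed G\<close>] D B by blast
qed

end
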